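(* Let $T=K[X,Y]$ be $\mathbb Z/n\mathbb Z$-graded by $\deg X=\overline1$, $\deg Y=\overline{-1}$, let $S=T/(X^{n-2}-Y^2)=\bigoplus_{\bar i\in\mathbb Z/n\mathbb Z}S_{\bar i}$ with the induced grading, and regard $S$ as an $R$-algebra via $x\mapsto \overline{XY}$. Let $S^{[n]}\subset M_n(S)$ be the $R$-subalgebra whose $(i,j)$ entry ranges over $S_{\overline{j-i}}$. Then there is an isomorphism of $R$-algebras $S^{[n]}\cong\Lambda$.
   Context: $K$ a field, $R=K[x]$, $n\ge3$. $\Lambda\subset M_n(K(x))$ is the $R$-order whose $(i,j)$ entry ranges over $x^{c_{ij}}R$, with $c_{ij}=0$ for $i\le j$ except $c_{1n}=-1$, $c_{ij}=1$ for $i=j+1$, $c_{ij}=2$ for $i\ge j+2$. *)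

theory Defs
  imports "HOL-Computational_Algebra.Polynomial" "HOL-Computational_Algebra.Fraction_Field"
begin

(* K = 'a :: field, R = K[x] = 'a poly.
   T = K[X,Y] is represented as ('a poly) poly: polynomials in Y with coefficients in K[X].
   The monomial X^a Y^b of p :: 'a poly poly has coefficient  coeff (coeff p b) a. *)

definition Xv :: "'a::comm_ring_1 poly poly" where "Xv = [:[:0, 1:]:]"
definition Yv :: "'a::comm_ring_1 poly poly" where "Yv = [:0, 1:]"

definition frel :: "nat \<Rightarrow> 'a::comm_ring_1 poly poly" where
  "frel n = Xv ^ (n - 2) - Yv ^ 2"

definition T_hom :: "nat \<Rightarrow> int \<Rightarrow> 'a::comm_ring_1 poly poly \<Rightarrow> bool" where
  "T_hom n k p \<longleftrightarrow>
     (\<forall>a b. coeff (coeff p b) a \<noteq> 0 \<longrightarrow> int n dvd (int a - int b - k))"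

(* S = T/(f): an element of S is a coset p + (f) *)
definition Scls :: "nat \<Rightarrow> 'a::comm_ring_1 poly poly \<Rightarrow> 'a poly poly set" where
  "Scls n p = {q. frel n dvd (q - p)}"

definition Scarrier :: "nat \<Rightarrow> 'a::comm_ring_1 poly poly set set" where
  "Scarrier n = range (Scls n)"

definition Srep :: "'a poly poly set \<Rightarrow> 'a poly poly" where
  "Srep A = (SOME p. p \<in> A)"

definition Sgr :: "nat \<Rightarrow> int \<Rightarrow> 'a::comm_ring_1 poly poly set set" where
  "Sgr n k = Scls n ` {q. T_hom n k q}"

definition Rmap :: "'a::comm_ring_1 poly \<Rightarrow> 'a poly poly" where
  "Rmap r = poly (map_poly (\<lambda>c. [:[:c:]:]) r) (Xv * Yv)"

(* n x n matrices indexed by {1..n}, represented as functions, fixed value outside the range *)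
definition inrng :: "nat \<Rightarrow> nat \<Rightarrow> nat \<Rightarrow> bool" where
  "inrng n i j \<longleftrightarrow> i \<in> {1..n} \<and> j \<in> {1..n}"

definition Sn :: "nat \<Rightarrow> (nat \<Rightarrow> nat \<Rightarrow> 'a::comm_ring_1 poly poly set) set" where
  "Sn n = {M. \<forall>i j. (inrng n i j \<longrightarrow> M i j \<in> Sgr n (int j - int i))
                    \<and> (\<not> inrng n i j \<longrightarrow> M i j = Scls n 0)}"

definition Smat_add :: "nat \<Rightarrow> (nat \<Rightarrow> nat \<Rightarrow> 'a::comm_ring_1 poly poly set) \<Rightarrow> _ \<Rightarrow> _" where
  "Smat_add n A B = (\<lambda>i j. if inrng n i j then Scls n (Srep (A i j) + Srep (B i j)) else Scls n 0)"

definition Smat_mul :: "nat \<Rightarrow> (nat \<Rightarrow> nat \<Rightarrow> 'a::comm_ring_1 poly poly set) \<Rightarrow> _ \<Rightarrow> _" where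
  "Smat_mul n A B = (\<lambda>i j. if inrng n i j
       then Scls n (\<Sum>k\<in>{1..n}. Srep (A i k) * Srep (B k j)) else Scls n 0)"

definition Smat_one :: "nat \<Rightarrow> nat \<Rightarrow> nat \<Rightarrow> 'a::comm_ring_1 poly poly set" where
  "Smat_one n = (\<lambda>i j. if inrng n i j then Scls n (if i = j then 1 else 0) else Scls n 0)"

definition Smat_scale :: "nat \<Rightarrow> 'a::comm_ring_1 poly \<Rightarrow> (nat \<Rightarrow> nat \<Rightarrow> 'a poly poly set) \<Rightarrow> _" where
  "Smat_scale n r A = (\<lambda>i j. if inrng n i j then Scls n (Rmap r * Srep (A i j)) else Scls n 0)"

definition cexp :: "nat \<Rightarrow> nat \<Rightarrow> nat \<Rightarrow> int" where
  "cexp n i j = (if i \<le> j then (if i = 1 \<and> j = n then -1 else 0)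
                 else if i = j + 1 then 1 else 2)"

definition xK :: "'a::field poly fract" where "xK = Fract [:0, 1:] 1"

definition Lam :: "nat \<Rightarrow> (nat \<Rightarrow> nat \<Rightarrow> 'a::field poly fract) set" where
  "Lam n = {M. \<forall>i j. (inrng n i j \<longrightarrow> (\<exists>p. M i j = xK powi cexp n i j * Fract p 1))
                    \<and> (\<not> inrng n i j \<longrightarrow> M i j = 0)}"

definition Lmat_add :: "nat \<Rightarrow> (nat \<Rightarrow> nat \<Rightarrow> 'a::field poly fract) \<Rightarrow> _ \<Rightarrow> _" where
  "Lmat_add n A B = (\<lambda>i j. if inrng n i j then A i j + B i j else 0)"

definition Lmat_mul :: "nat \<Rightarrow> (nat \<Rightarrow> nat \<Rightarrow> 'a::field poly fract) \<Rightarrow> _ \<Rightarrow> _" where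
  "Lmat_mul n A B = (\<lambda>i j. if inrng n i j then (\<Sum>k\<in>{1..n}. A i k * B k j) else 0)"

definition Lmat_one :: "nat \<Rightarrow> nat \<Rightarrow> nat \<Rightarrow> 'a::field poly fract" where
  "Lmat_one n = (\<lambda>i j. if inrng n i j \<and> i = j then 1 else 0)"

definition Lmat_scale :: "nat \<Rightarrow> 'a::field poly \<Rightarrow> (nat \<Rightarrow> nat \<Rightarrow> 'a poly fract) \<Rightarrow> _" where
  "Lmat_scale n r A = (\<lambda>i j. if inrng n i j then Fract r 1 * A i j else 0)"

end

(*
  Substituting X := t^2, Y := t^(n-2) kills X^(n-2) - Y^2 and sends x = XY to t^n, so it induces
  an R-linear map from S to K[t], on which x acts as t^n. For even n this map is not injective
  on S, but it is injective on every graded piece: S_k is the free R-module generated by X^k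
  (0 <= k <= n-2) or by Y (k = n-1), so its image is t^e K[t^n] with t^e the image of the
  generator. For 1 <= i, j <= n the exponent belonging to S_(j-i) is n c_ij + 2j - 2i; hence,
  after conjugation by diag(t^(2i)), the (i,j) entries of S^[n] become exactly x^(c_ij) K[x].
  The isomorphism sends an entry with image t^e r(t^n) to x^(c_ij) r.
*)

theory Submission imports Defs begin

section \<open>The substitution \<open>X := t\<^sup>2\<close>, \<open>Y := t\<^sup>n\<^sup>-\<^sup>2\<close>\<close>

lemma map_poly_add_hom:
  assumes "h 0 = 0" "\<And>x y. h (x + y) = h x + h y"
  shows "map_poly h (p + q) = map_poly h p + map_poly h q"
  by (intro poly_eqI) (simp add: coeff_map_poly assms)

lemma map_poly_mult_hom:
  fixes h :: "'a::comm_semiring_0 \<Rightarrow> 'b::comm_semiring_0"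
  assumes "h 0 = 0" "\<And>x y. h (x + y) = h x + h y" "\<And>x y. h (x * y) = h x * h y"
  shows "map_poly h (p * q) = map_poly h p * map_poly h q"
proof (induction p)
  case (pCons a p)
  have "map_poly h (pCons a p * q) = map_poly h (smult a q) + map_poly h (pCons 0 (p * q))"
    by (simp add: map_poly_add_hom assms)
  also have "\<dots> = smult (h a) (map_poly h q) + pCons 0 (map_poly h p * map_poly h q)"
    using pCons.IH by (simp add: map_poly_smult map_poly_pCons assms)
  finally show ?case
    by (simp add: map_poly_pCons assms)
qed simp

definition curve_eval :: "nat \<Rightarrow> 'a::comm_ring_1 poly poly \<Rightarrow> 'a poly" where
  "curve_eval n p = poly (map_poly (\<lambda>c. c \<circ>\<^sub>p monom 1 2) p) (monom 1 (n - 2))"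

lemma curve_eval_add: "curve_eval n (p + q) = curve_eval n p + curve_eval n q"
  by (simp add: curve_eval_def map_poly_add_hom pcompose_add)

lemma curve_eval_mult: "curve_eval n (p * q) = curve_eval n p * curve_eval n q"
  by (simp add: curve_eval_def map_poly_mult_hom pcompose_add pcompose_mult)

lemma curve_eval_0 [simp]: "curve_eval n 0 = 0"
  by (simp add: curve_eval_def)

lemma curve_eval_1 [simp]: "curve_eval n 1 = 1"
  by (simp add: curve_eval_def pcompose_1)

lemma curve_eval_diff: "curve_eval n (p - q) = curve_eval n p - curve_eval n q"
  using curve_eval_add[of n "p - q" q] by (simp add: algebra_simps)

lemma curve_eval_power: "curve_eval n (p ^ k) = curve_eval n p ^ k"
  by (induction k) (simp_all add: curve_eval_mult)

lemma curve_eval_sum: "curve_eval n (sum f A) = (\<Sum>x\<in>A. curve_eval n (f x))"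
  by (induction A rule: infinite_finite_induct) (simp_all add: curve_eval_add)

lemma curve_eval_const [simp]: "curve_eval n [:[:c:]:] = [:c:]"
  by (simp add: curve_eval_def map_poly_pCons)

lemma curve_eval_Xv [simp]: "curve_eval n Xv = monom 1 2"
  by (simp add: curve_eval_def Xv_def map_poly_pCons pcompose_pCons)

lemma curve_eval_Yv [simp]: "curve_eval n Yv = monom 1 (n - 2)"
  by (simp add: curve_eval_def Yv_def map_poly_pCons pcompose_1)

lemma curve_eval_frel: "n \<ge> 2 \<Longrightarrow> curve_eval n (frel n) = 0"
  by (simp add: frel_def curve_eval_diff curve_eval_power monom_power mult.commute)

lemma curve_eval_cong:
  assumes "n \<ge> 2" "frel n dvd (p - q)"
  shows "curve_eval n p = curve_eval n q"
proof -
  obtain c where "p - q = frel n * c"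
    using assms(2) by (elim dvdE)
  then have "curve_eval n (p - q) = 0"
    using assms(1) by (simp add: curve_eval_mult curve_eval_frel)
  then show ?thesis
    by (simp add: curve_eval_diff)
qed

lemma Rmap_add: "Rmap (r + s) = Rmap r + Rmap s"
  by (simp add: Rmap_def map_poly_add_hom)

lemma Rmap_mult: "Rmap (r * s) = Rmap r * Rmap s"
  by (simp add: Rmap_def map_poly_mult_hom)

lemma Rmap_0 [simp]: "Rmap 0 = 0"
  by (simp add: Rmap_def)

lemma Rmap_1 [simp]: "Rmap 1 = 1"
  by (simp add: Rmap_def flip: one_pCons)

lemma Rmap_const [simp]: "Rmap [:c:] = [:[:c:]:]"
  by (simp add: Rmap_def map_poly_pCons)

lemma Rmap_smult: "Rmap (smult c r) = [:[:c:]:] * Rmap r"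
  using Rmap_mult[of "[:c:]" r] by simp

lemma Rmap_sum: "Rmap (sum f A) = (\<Sum>x\<in>A. Rmap (f x))"
  by (induction A rule: infinite_finite_induct) (simp_all add: Rmap_add)

lemma Rmap_power: "Rmap (r ^ m) = Rmap r ^ m"
  by (induction m) (simp_all add: Rmap_mult)

lemma Rmap_pCons: "Rmap (pCons a r) = [:[:a:]:] + Xv * Yv * Rmap r"
  by (simp add: Rmap_def map_poly_pCons)

lemma Rmap_x: "Rmap [:0, 1:] = Xv * Yv"
  by (simp add: Rmap_def map_poly_pCons flip: one_pCons)

lemma curve_eval_Rmap: "n \<ge> 2 \<Longrightarrow> curve_eval n (Rmap r) = r \<circ>\<^sub>p monom 1 n"
proof (induction r)
  case (pCons a r)
  have "2 + (n - 2) = n"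
    using pCons.prems by simp
  then have "monom 1 2 * monom 1 (n - 2) = (monom 1 n :: 'a poly)"
    by (simp only: mult_monom mult_1)
  with pCons show ?case
    by (simp add: Rmap_pCons curve_eval_add curve_eval_mult pcompose_pCons flip: mult.assoc)
qed simp

section \<open>Generators of the graded pieces\<close>

definition Sgen :: "nat \<Rightarrow> int \<Rightarrow> 'a::comm_ring_1 poly poly" where
  "Sgen n k = (if k mod int n = int n - 1 then Yv else Xv ^ nat (k mod int n))"

definition Sgen_exp :: "nat \<Rightarrow> int \<Rightarrow> nat" where
  "Sgen_exp n k = (if k mod int n = int n - 1 then n - 2 else 2 * nat (k mod int n))"

definition Sgen_multiple :: "nat \<Rightarrow> int \<Rightarrow> 'a::comm_ring_1 poly poly \<Rightarrow> bool" where
  "Sgen_multiple n k q \<longleftrightarrow> (\<exists>r. frel n dvd (q - Sgen n k * Rmap r))"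

lemma curve_eval_Sgen: "curve_eval n (Sgen n k) = monom 1 (Sgen_exp n k)"
proof -
  have "curve_eval n (Xv ^ m) = monom 1 (2 * m)" for m
    by (simp add: curve_eval_power monom_power mult.commute[of m])
  then show ?thesis
    unfolding Sgen_def Sgen_exp_def by (cases "k mod int n = int n - 1") simp_all
qed

lemma Sgen_mod_eq: "k mod int n = k' mod int n \<Longrightarrow> Sgen n k = Sgen n k'"
  by (simp add: Sgen_def)

lemma Sgen_multiple_mod_eq:
  assumes "k mod int n = k' mod int n"
  shows "Sgen_multiple n k q \<longleftrightarrow> Sgen_multiple n k' q"
  unfolding Sgen_multiple_def by (simp add: Sgen_mod_eq[OF assms])

lemma Sgen_multiple_cong:
  assumes "frel n dvd (q - q')" "Sgen_multiple n k q'"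
  shows "Sgen_multiple n k q"
proof -
  obtain r where "frel n dvd (q' - Sgen n k * Rmap r)"
    using assms(2) unfolding Sgen_multiple_def by blast
  with assms(1) have "frel n dvd ((q - q') + (q' - Sgen n k * Rmap r))"
    by (rule dvd_add)
  then show ?thesis
    unfolding Sgen_multiple_def by auto
qed

lemma Sgen_multiple_0: "Sgen_multiple n k 0"
  unfolding Sgen_multiple_def by (intro exI[of _ 0]) simp

lemma Sgen_multiple_Sgen: "Sgen_multiple n k (Sgen n k)"
  unfolding Sgen_multiple_def by (intro exI[of _ 1]) simp

lemma Sgen_multiple_add:
  assumes "Sgen_multiple n k p" "Sgen_multiple n k q"
  shows "Sgen_multiple n k (p + q)"
proof -
  obtain r s where "frel n dvd (p - Sgen n k * Rmap r)" "frel n dvd (q - Sgen n k * Rmap s)"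
    using assms unfolding Sgen_multiple_def by blast
  then have "frel n dvd ((p - Sgen n k * Rmap r) + (q - Sgen n k * Rmap s))"
    by (rule dvd_add)
  then have "frel n dvd (p + q - Sgen n k * Rmap (r + s))"
    by (simp add: Rmap_add algebra_simps)
  then show ?thesis
    unfolding Sgen_multiple_def by blast
qed

lemma Sgen_multiple_sum: "(\<And>x. x \<in> A \<Longrightarrow> Sgen_multiple n k (f x)) \<Longrightarrow> Sgen_multiple n k (sum f A)"
  by (induction A rule: infinite_finite_induct) (simp_all add: Sgen_multiple_0 Sgen_multiple_add)

lemma Sgen_multiple_Rmap_mult:
  assumes "Sgen_multiple n k q"
  shows "Sgen_multiple n k (Rmap s * q)"
proof -
  obtain r where "frel n dvd (q - Sgen n k * Rmap r)"
    using assms unfolding Sgen_multiple_def by blast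
  then have "frel n dvd (Rmap s * (q - Sgen n k * Rmap r))"
    by (rule dvd_mult)
  then have "frel n dvd (Rmap s * q - Sgen n k * Rmap (s * r))"
    by (simp add: Rmap_mult algebra_simps)
  then show ?thesis
    unfolding Sgen_multiple_def by blast
qed

lemma Sgen_multiple_XY_mult: "Sgen_multiple n k q \<Longrightarrow> Sgen_multiple n k (Xv * Yv * q)"
  using Sgen_multiple_Rmap_mult[of n k q "[:0, 1:]"] by (simp add: Rmap_x)

lemma Sgen_eq_X_power:
  assumes "n \<ge> 2" "a \<le> n - 2"
  shows "Sgen n (int a) = Xv ^ a"
proof -
  have "int a \<noteq> int n - 1"
    using assms by linarith
  with assms show ?thesis
    by (simp add: Sgen_def)
qed

lemma Sgen_eq_Yv: "k mod int n = int n - 1 \<Longrightarrow> Sgen n k = Yv"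
  by (simp add: Sgen_def)

lemma Sgen_multiple_Y_square_iff:
  "Sgen_multiple n k (Xv ^ (n - 2) * c) \<longleftrightarrow> Sgen_multiple n k (Yv ^ 2 * c)"
proof -
  have "Xv ^ (n - 2) * c - Yv ^ 2 * c = frel n * c"
    by (simp add: frel_def left_diff_distrib)
  then have "frel n dvd (Xv ^ (n - 2) * c - Yv ^ 2 * c)"
    by simp
  moreover from this have "frel n dvd (Yv ^ 2 * c - Xv ^ (n - 2) * c)"
    by (metis dvd_minus_iff minus_diff_eq)
  ultimately show ?thesis
    using Sgen_multiple_cong by blast
qed

lemma Sgen_multiple_X_power:
  assumes "n \<ge> 3"
  shows "Sgen_multiple n (int a) (Xv ^ a :: 'a::comm_ring_1 poly poly)"
proof (induction a rule: less_induct)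
  case (less a)
  consider "a \<le> n - 2" | "a = n - 1" | "a \<ge> n"
    by linarith
  then show ?case
  proof cases
    case 1
    then show ?thesis
      using Sgen_multiple_Sgen[of n "int a"] assms by (simp add: Sgen_eq_X_power)
  next
    case 2
    then have "a = Suc (n - 2)"
      using assms by simp
    then have a: "(Xv :: 'a poly poly) ^ a = Xv ^ (n - 2) * Xv"
      by (simp only: power_Suc2)
    have "int a mod int n = int n - 1"
      using 2 assms by (simp add: of_nat_diff zmod_minus1)
    then have "Sgen_multiple n (int a) (Yv :: 'a poly poly)"
      using Sgen_multiple_Sgen[of n "int a"] by (simp add: Sgen_eq_Yv)
    then have "Sgen_multiple n (int a) (Xv * Yv * Yv :: 'a poly poly)"
      by (rule Sgen_multiple_XY_mult)
    moreover have "(Xv :: 'a poly poly) * Yv * Yv = Yv ^ 2 * Xv"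
      by (simp add: power2_eq_square ac_simps)
    ultimately have "Sgen_multiple n (int a) (Yv ^ 2 * Xv :: 'a poly poly)"
      by simp
    then show ?thesis
      unfolding a Sgen_multiple_Y_square_iff .
  next
    case 3
    have "n - 2 + (a - n + 2) = a"
      using 3 assms by simp
    then have a: "(Xv :: 'a poly poly) ^ a = Xv ^ (n - 2) * Xv ^ (a - n + 2)"
      by (metis power_add)
    have "Sgen_multiple n (int (a - n)) (Xv ^ (a - n) :: 'a poly poly)"
      using 3 assms by (intro less.IH) simp
    then have "Sgen_multiple n (int (a - n)) (Xv * Yv * (Xv * Yv * Xv ^ (a - n)) :: 'a poly poly)"
      by (intro Sgen_multiple_XY_mult)
    moreover have "int (a - n) mod int n = int a mod int n"
      using 3 by (simp add: of_nat_diff)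
    moreover have "(Xv :: 'a poly poly) * Yv * (Xv * Yv * Xv ^ (a - n)) = Yv ^ 2 * Xv ^ (a - n + 2)"
      by (simp add: power_add power2_eq_square ac_simps)
    ultimately have "Sgen_multiple n (int a) (Yv ^ 2 * Xv ^ (a - n + 2) :: 'a poly poly)"
      using Sgen_multiple_mod_eq by metis
    then show ?thesis
      unfolding a Sgen_multiple_Y_square_iff .
  qed
qed

lemma Sgen_multiple_monomial:
  assumes "n \<ge> 3"
  shows "Sgen_multiple n (int a - int b) (Xv ^ a * Yv ^ b :: 'a::comm_ring_1 poly poly)"
proof (induction b arbitrary: a rule: less_induct)
  case (less b)
  consider "b = 0" | "a > 0" "b > 0" | "a = 0" "b = 1" | "a = 0" "b \<ge> 2"
    by linarith
  then show ?case
  proof cases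
    case 1
    then show ?thesis
      using Sgen_multiple_X_power[OF assms] by simp
  next
    case 2
    have "Sgen_multiple n (int (a - 1) - int (b - 1)) (Xv ^ (a - 1) * Yv ^ (b - 1) :: 'a poly poly)"
      using 2 by (intro less.IH) simp
    then have "Sgen_multiple n (int a - int b) (Xv * Yv * (Xv ^ (a - 1) * Yv ^ (b - 1)) :: 'a poly poly)"
      using 2 by (simp add: Sgen_multiple_XY_mult of_nat_diff)
    moreover have "Xv * Yv * (Xv ^ (a - 1) * Yv ^ (b - 1)) = (Xv ^ a * Yv ^ b :: 'a poly poly)"
      using 2 by (cases a; cases b) (simp_all add: ac_simps)
    ultimately show ?thesis
      by simp
  next
    case 3
    then show ?thesis
      using Sgen_multiple_Sgen[of n "-1"] assms by (simp add: Sgen_eq_Yv zmod_minus1)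
  next
    case 4
    have "Sgen_multiple n (int (n - 2) - int (b - 2)) (Xv ^ (n - 2) * Yv ^ (b - 2) :: 'a poly poly)"
      using 4 by (intro less.IH) simp
    moreover have "(int (n - 2) - int (b - 2)) mod int n = (int a - int b) mod int n"
      using 4 assms by (simp add: of_nat_diff)
    ultimately have "Sgen_multiple n (int a - int b) (Yv ^ 2 * Yv ^ (b - 2) :: 'a poly poly)"
      using Sgen_multiple_mod_eq Sgen_multiple_Y_square_iff by blast
    moreover have "Yv ^ 2 * Yv ^ (b - 2) = (Xv ^ a * Yv ^ b :: 'a poly poly)"
      using 4 by (metis le_add_diff_inverse mult_1 power_0 power_add)
    ultimately show ?thesis
      by simp
  qed
qed

lemma Sgen_multiple_const_mult: "Sgen_multiple n k q \<Longrightarrow> Sgen_multiple n k ([:[:c:]:] * q)"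
  using Sgen_multiple_Rmap_mult[of n k q "[:c:]"] by simp

lemma Xv_power: "Xv ^ a = [:monom 1 a:]"
  by (induction a) (simp_all add: Xv_def monom_Suc one_pCons)

lemma Yv_power: "Yv ^ b = monom 1 b"
  by (simp add: Yv_def monom_altdef)

lemma monom_monom_eq: "monom (monom c a) b = [:[:c:]:] * (Xv ^ a * Yv ^ b)"
  by (simp add: Xv_power Yv_power smult_monom)

lemma Sgen_multiple_if_T_hom:
  assumes "n \<ge> 3" "T_hom n k p"
  shows "Sgen_multiple n k p"
proof -
  have "Sgen_multiple n k (monom (monom (coeff (coeff p b) a) a) b)" for a b
  proof (cases "coeff (coeff p b) a = 0")
    case False
    then have "(int a - int b) mod int n = k mod int n"
      using assms(2) by (simp add: T_hom_def mod_eq_dvd_iff)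
    then show ?thesis
      unfolding monom_monom_eq
      using Sgen_multiple_monomial[OF assms(1)] Sgen_multiple_mod_eq Sgen_multiple_const_mult
      by blast
  qed (simp add: Sgen_multiple_0)
  then have "Sgen_multiple n k (\<Sum>b\<le>degree p. monom (\<Sum>a\<le>degree (coeff p b). monom (coeff (coeff p b) a) a) b)"
    by (simp add: monom_sum Sgen_multiple_sum)
  then show ?thesis
    by (simp add: poly_as_sum_of_monoms)
qed

lemma T_hom_0: "T_hom n k 0"
  by (simp add: T_hom_def)

lemma T_hom_add:
  assumes "T_hom n k p" "T_hom n k q"
  shows "T_hom n k (p + q)"
  unfolding T_hom_def
proof (intro allI impI)
  fix a b
  assume "coeff (coeff (p + q) b) a \<noteq> 0"
  then have "coeff (coeff p b) a \<noteq> 0 \<or> coeff (coeff q b) a \<noteq> 0"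
    by auto
  then show "int n dvd (int a - int b - k)"
    using assms unfolding T_hom_def by blast
qed

lemma T_hom_sum: "(\<And>x. x \<in> A \<Longrightarrow> T_hom n k (f x)) \<Longrightarrow> T_hom n k (sum f A)"
  by (induction A rule: infinite_finite_induct) (simp_all add: T_hom_0 T_hom_add)

lemma T_hom_monom: "int n dvd (int a - int b - k) \<Longrightarrow> T_hom n k (monom (monom c a) b)"
  by (auto simp: T_hom_def coeff_monom split: if_splits)

lemma Sgen_eq_monomial:
  assumes "n > 0"
  obtains a b where "Sgen n k = (Xv ^ a * Yv ^ b :: 'a::comm_ring_1 poly poly)"
    "int n dvd (int a - int b - k)"
proof (cases "k mod int n = int n - 1")
  case True
  have "int n dvd (k - (int n - 1))"
    using dvd_minus_mod[of "int n" k] by (simp only: True)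
  then have "int n dvd (- (k - (int n - 1)) - int n)"
    by (metis dvd_diff dvd_minus_iff dvd_refl)
  then have "int n dvd (int 0 - int 1 - k)"
    by (simp add: algebra_simps)
  with True show ?thesis
    using that[of 0 1] by (simp add: Sgen_eq_Yv)
next
  case False
  have "int n dvd (k mod int n - k)"
    by (metis dvd_minus_iff minus_diff_eq dvd_minus_mod)
  then have "int n dvd (int (nat (k mod int n)) - int 0 - k)"
    using assms by simp
  with False show ?thesis
    using that[of "nat (k mod int n)" 0] by (simp add: Sgen_def)
qed

lemma Rmap_eq_sum: "Rmap r = (\<Sum>m\<le>degree r. [:[:coeff r m:]:] * (Xv * Yv) ^ m)"
proof -
  have "Rmap r = Rmap (\<Sum>m\<le>degree r. smult (coeff r m) ([:0, 1:] ^ m))"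
    by (simp add: poly_as_sum_of_monoms flip: monom_altdef)
  then show ?thesis
    by (simp add: Rmap_sum Rmap_smult Rmap_power Rmap_x)
qed

lemma T_hom_Sgen_Rmap:
  assumes "n > 0"
  shows "T_hom n k (Sgen n k * Rmap r :: 'a::comm_ring_1 poly poly)"
proof -
  obtain a b where ab: "Sgen n k = (Xv ^ a * Yv ^ b :: 'a poly poly)" "int n dvd (int a - int b - k)"
    using Sgen_eq_monomial[OF assms] .
  have "Sgen n k * Rmap r = (\<Sum>m\<le>degree r. monom (monom (coeff r m) (a + m)) (b + m))"
    by (simp add: ab(1) Rmap_eq_sum sum_distrib_left monom_monom_eq power_add
        power_mult_distrib ac_simps)
  also have "T_hom n k \<dots>"
    using ab(2) by (intro T_hom_sum T_hom_monom) simp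
  finally show ?thesis .
qed

section \<open>Coordinates on the graded pieces\<close>

definition dilate :: "nat \<Rightarrow> nat \<Rightarrow> 'a::comm_semiring_1 poly \<Rightarrow> 'a poly" where
  "dilate n s r = monom 1 s * (r \<circ>\<^sub>p monom 1 n)"

lemma pcompose_monom_one: "monom 1 d \<circ>\<^sub>p q = q ^ d"
  by (induction d) (simp_all add: monom_Suc pcompose_pCons pcompose_1 flip: one_pCons)

lemma dilate_add: "dilate n s (p + q) = dilate n s p + dilate n s q"
  by (simp add: dilate_def pcompose_add distrib_left)

lemma dilate_sum: "dilate n s (sum f A) = (\<Sum>x\<in>A. dilate n s (f x))"
  by (simp add: dilate_def pcompose_sum sum_distrib_left)

lemma monom_one_add: "monom (1 :: 'a::comm_semiring_1) (a + b) = monom 1 a * monom 1 b"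
  by (simp add: mult_monom)

lemma dilate_mult: "dilate n s p * dilate n s' q = dilate n (s + s') (p * q)"
  unfolding dilate_def pcompose_mult monom_one_add by (simp add: ac_simps)

lemma dilate_monom_mult: "dilate n s (monom 1 d * p) = dilate n (s + n * d) p"
  unfolding dilate_def pcompose_mult pcompose_monom_one monom_one_add
  by (simp add: monom_power ac_simps)

lemma inj_dilate:
  assumes "n > 0"
  shows "inj (dilate n s :: 'a::idom poly \<Rightarrow> 'a poly)"
proof (rule injI)
  fix p q :: "'a poly"
  assume "dilate n s p = dilate n s q"
  then have "(p - q) \<circ>\<^sub>p monom 1 n = 0"
    by (simp add: dilate_def pcompose_diff)
  then show "p = q"
    using pcompose_eq_0[of "p - q" "monom 1 n"] assms by (simp add: degree_monom_eq)
qed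

lemma curve_eval_Sgen_Rmap:
  "n \<ge> 2 \<Longrightarrow> curve_eval n (Sgen n k * Rmap r) = dilate n (Sgen_exp n k) r"
  by (simp add: dilate_def curve_eval_mult curve_eval_Sgen curve_eval_Rmap)

lemma frel_dvd_if_curve_eval_eq:
  fixes p q :: "'a::idom poly poly"
  assumes "n \<ge> 3" "T_hom n k p" "T_hom n k q" "curve_eval n p = curve_eval n q"
  shows "frel n dvd (p - q)"
proof -
  obtain r r' where r: "frel n dvd (p - Sgen n k * Rmap r)" and r': "frel n dvd (q - Sgen n k * Rmap r')"
    using Sgen_multiple_if_T_hom assms(1-3) unfolding Sgen_multiple_def by metis
  have "dilate n (Sgen_exp n k) r = dilate n (Sgen_exp n k) r'"
    using curve_eval_cong[OF _ r] curve_eval_cong[OF _ r'] assms(1,4)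
    by (simp add: curve_eval_Sgen_Rmap)
  moreover have "inj (dilate n (Sgen_exp n k) :: 'a poly \<Rightarrow> 'a poly)"
    using assms(1) by (intro inj_dilate) simp
  ultimately have "r = r'"
    by (simp add: inj_eq)
  then have "p - q = (p - Sgen n k * Rmap r) - (q - Sgen n k * Rmap r')"
    by simp
  then show ?thesis
    using r r' by (metis dvd_diff)
qed

lemma Srep_Scls: "frel n dvd (Srep (Scls n p) - p)"
proof -
  have "Srep (Scls n p) \<in> Scls n p"
    unfolding Srep_def by (rule someI[of _ p]) (simp add: Scls_def)
  then show ?thesis
    by (simp add: Scls_def)
qed

lemma Scls_eq: "frel n dvd (p - q) \<Longrightarrow> Scls n p = Scls n q"
  unfolding Scls_def by (metis (no_types, opaque_lifting) diff_add_cancel diff_diff_add dvd_add_left_iff)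

lemma curve_eval_Srep_Scls: "n \<ge> 2 \<Longrightarrow> curve_eval n (Srep (Scls n p)) = curve_eval n p"
  by (rule curve_eval_cong[OF _ Srep_Scls])

text \<open>Meaningful only for \<open>C \<in> Sgr n k\<close>, where it is the coordinate of \<open>C\<close> with respect to
  the generator \<open>Sgen n k\<close>.\<close>

definition Scoord :: "nat \<Rightarrow> int \<Rightarrow> 'a::idom poly poly set \<Rightarrow> 'a poly" where
  "Scoord n k C = the_inv_into UNIV (dilate n (Sgen_exp n k)) (curve_eval n (Srep C))"

lemma Scoord_eq:
  "n \<ge> 3 \<Longrightarrow> curve_eval n (Srep C) = dilate n (Sgen_exp n k) r \<Longrightarrow> Scoord n k C = r"
  unfolding Scoord_def by (intro the_inv_into_f_eq inj_dilate) simp_all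

lemma curve_eval_Srep_Sgr:
  assumes "n \<ge> 3" "C \<in> Sgr n k"
  shows "curve_eval n (Srep C) = dilate n (Sgen_exp n k) (Scoord n k C)"
proof -
  obtain q where q: "C = Scls n q" "T_hom n k q"
    using assms(2) by (auto simp: Sgr_def)
  obtain r where "frel n dvd (q - Sgen n k * Rmap r)"
    using Sgen_multiple_if_T_hom[OF assms(1) q(2)] unfolding Sgen_multiple_def by blast
  then have "curve_eval n (Srep C) = dilate n (Sgen_exp n k) r"
    using assms(1) by (simp add: q(1) curve_eval_Srep_Scls curve_eval_cong curve_eval_Sgen_Rmap)
  moreover from assms(1) this have "Scoord n k C = r"
    by (rule Scoord_eq)
  ultimately show ?thesis
    by simp
qed

lemma Scoord_inj:
  assumes "n \<ge> 3" "C \<in> Sgr n k" "D \<in> Sgr n k" "Scoord n k C = Scoord n k D"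
  shows "C = D"
proof -
  obtain p q where p: "C = Scls n p" "T_hom n k p" and q: "D = Scls n q" "T_hom n k q"
    using assms(2,3) by (auto simp: Sgr_def)
  have "curve_eval n p = curve_eval n q"
    using curve_eval_Srep_Sgr[OF assms(1,2)] curve_eval_Srep_Sgr[OF assms(1,3)] assms(1,4)
    by (simp add: p(1) q(1) curve_eval_Srep_Scls)
  then show ?thesis
    using frel_dvd_if_curve_eval_eq[OF assms(1) p(2) q(2)] by (simp add: p(1) q(1) Scls_eq)
qed

lemma Scls_Sgen_Rmap_in_Sgr: "n > 0 \<Longrightarrow> Scls n (Sgen n k * Rmap r) \<in> Sgr n k"
  unfolding Sgr_def using T_hom_Sgen_Rmap by blast

lemma Scoord_Scls_Sgen_Rmap: "n \<ge> 3 \<Longrightarrow> Scoord n k (Scls n (Sgen n k * Rmap r)) = r"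
  by (rule Scoord_eq) (simp_all add: curve_eval_Srep_Scls curve_eval_Sgen_Rmap)

section \<open>The isomorphism\<close>

lemma Sgen_exp_weight:
  assumes "n \<ge> 3" "inrng n i j"
  shows "int (Sgen_exp n (int j - int i)) = int n * cexp n i j + 2 * int j - 2 * int i"
proof -
  have ij: "1 \<le> i" "i \<le> n" "1 \<le> j" "j \<le> n"
    using assms(2) by (auto simp: inrng_def)
  have "(int j - int i) mod int n = int j - int i" if "i \<le> j"
    using that ij by (intro mod_pos_pos_trivial) auto
  moreover have "(int j - int i) mod int n = int j - int i + int n" if "j < i"
  proof -
    have "(int j - int i) mod int n = (int j - int i + int n) mod int n"
      by simp
    also have "\<dots> = int j - int i + int n"
      using that ij by (intro mod_pos_pos_trivial) auto
    finally show ?thesis .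
  qed
  ultimately show ?thesis
    using ij assms(1) by (cases "i \<le> j") (auto simp: Sgen_exp_def cexp_def)
qed

lemma cexp_le_add: "n \<ge> 3 \<Longrightarrow> inrng n i l \<Longrightarrow> inrng n l j \<Longrightarrow> cexp n i j \<le> cexp n i l + cexp n l j"
  by (auto simp: inrng_def cexp_def)

lemma Sgen_exp_add:
  assumes "n \<ge> 3" "inrng n i l" "inrng n l j"
  shows "Sgen_exp n (int l - int i) + Sgen_exp n (int j - int l)
    = Sgen_exp n (int j - int i) + n * nat (cexp n i l + cexp n l j - cexp n i j)"
proof -
  have "inrng n i j"
    using assms(2,3) by (simp add: inrng_def)
  then have "int (Sgen_exp n (int l - int i) + Sgen_exp n (int j - int l))
      = int (Sgen_exp n (int j - int i)) + int n * (cexp n i l + cexp n l j - cexp n i j)"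
    using Sgen_exp_weight[OF assms(1,2)] Sgen_exp_weight[OF assms(1,3)]
      Sgen_exp_weight[OF assms(1) \<open>inrng n i j\<close>]
    by (simp add: algebra_simps)
  also have "\<dots> = int (Sgen_exp n (int j - int i) + n * nat (cexp n i l + cexp n l j - cexp n i j))"
    using cexp_le_add[OF assms] by simp
  finally show ?thesis
    by (simp only: of_nat_eq_iff)
qed

lemma Fract_add_one: "Fract (a + b) 1 = Fract a 1 + Fract (b :: 'a::idom) 1"
  by simp

lemma Fract_mult_one: "Fract (a * b) 1 = Fract a 1 * Fract (b :: 'a::idom) 1"
  by simp

lemma Fract_sum: "Fract (sum f A) 1 = (\<Sum>x\<in>A. Fract (f x :: 'a::idom) 1)"
  by (induction A rule: infinite_finite_induct) (simp_all add: Zero_fract_def Fract_add_one del: add_fract)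

lemma Fract_power: "Fract (p ^ d) 1 = Fract (p :: 'a::idom) 1 ^ d"
  by (induction d) (simp_all add: One_fract_def Fract_mult_one del: mult_fract)

lemma Fract_monom_one: "Fract (monom 1 d) 1 = (xK :: 'a::field poly fract) ^ d"
  by (simp add: xK_def monom_altdef Fract_power)

lemma xK_nonzero: "xK \<noteq> 0"
  by (simp add: xK_def Zero_fract_def eq_fract)

lemma power_int_mult_power_nat_diff:
  fixes x :: "'a::division_ring"
  assumes "x \<noteq> 0" "c \<le> a + b"
  shows "x powi c * x ^ nat (a + b - c) = x powi a * x powi b"
proof -
  have "x powi c * x ^ nat (a + b - c) = x powi c * x powi (a + b - c)"
    using assms(2) by (simp flip: power_int_of_nat)
  also have "\<dots> = x powi (a + b)"
    using assms(1) by (simp flip: power_int_add)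
  also have "\<dots> = x powi a * x powi b"
    using assms(1) by (simp add: power_int_add)
  finally show ?thesis .
qed

definition Lam_iso :: "nat \<Rightarrow> (nat \<Rightarrow> nat \<Rightarrow> 'a::field poly poly set) \<Rightarrow> nat \<Rightarrow> nat \<Rightarrow> 'a poly fract" where
  "Lam_iso n A = (\<lambda>i j. if inrng n i j
     then xK powi cexp n i j * Fract (Scoord n (int j - int i) (A i j)) 1 else 0)"

lemma Sn_entry_in_Sgr: "A \<in> Sn n \<Longrightarrow> inrng n i j \<Longrightarrow> A i j \<in> Sgr n (int j - int i)"
  by (simp add: Sn_def)

lemma curve_eval_Srep_Sn_entry:
  "n \<ge> 3 \<Longrightarrow> A \<in> Sn n \<Longrightarrow> inrng n i j \<Longrightarrow>
    curve_eval n (Srep (A i j))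
      = dilate n (Sgen_exp n (int j - int i)) (Scoord n (int j - int i) (A i j))"
  by (intro curve_eval_Srep_Sgr Sn_entry_in_Sgr)

lemma Lam_iso_add:
  assumes n: "n \<ge> 3" and A: "A \<in> Sn n" and B: "B \<in> Sn n"
  shows "Lam_iso n (Smat_add n A B) = Lmat_add n (Lam_iso n A) (Lam_iso n B)"
proof (intro ext)
  fix i j
  show "Lam_iso n (Smat_add n A B) i j = Lmat_add n (Lam_iso n A) (Lam_iso n B) i j"
  proof (cases "inrng n i j")
    case True
    have "Scoord n (int j - int i) (Smat_add n A B i j)
        = Scoord n (int j - int i) (A i j) + Scoord n (int j - int i) (B i j)"
      using True n by (intro Scoord_eq)
        (simp_all add: Smat_add_def curve_eval_Srep_Scls curve_eval_add dilate_add
          curve_eval_Srep_Sn_entry[OF n A] curve_eval_Srep_Sn_entry[OF n B])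
    then show ?thesis
      using True by (simp add: Lam_iso_def Lmat_add_def Fract_add_one distrib_left del: add_fract)
  qed (simp add: Lam_iso_def Lmat_add_def)
qed

lemma Lam_iso_scale:
  assumes n: "n \<ge> 3" and A: "A \<in> Sn n"
  shows "Lam_iso n (Smat_scale n r A) = Lmat_scale n r (Lam_iso n A)"
proof (intro ext)
  fix i j
  show "Lam_iso n (Smat_scale n r A) i j = Lmat_scale n r (Lam_iso n A) i j"
  proof (cases "inrng n i j")
    case True
    have "curve_eval n (Rmap r) = dilate n 0 r"
      using n by (simp add: dilate_def curve_eval_Rmap)
    then have "Scoord n (int j - int i) (Smat_scale n r A i j) = r * Scoord n (int j - int i) (A i j)"
      using True n by (intro Scoord_eq)
        (simp_all add: Smat_scale_def curve_eval_Srep_Scls curve_eval_mult dilate_mult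
          curve_eval_Srep_Sn_entry[OF n A])
    then show ?thesis
      using True by (simp add: Lam_iso_def Lmat_scale_def Fract_mult_one ac_simps del: mult_fract)
  qed (simp add: Lam_iso_def Lmat_scale_def)
qed

lemma Lam_iso_one:
  assumes "n \<ge> 3"
  shows "Lam_iso n (Smat_one n :: nat \<Rightarrow> nat \<Rightarrow> 'a::field poly poly set) = Lmat_one n"
proof (intro ext)
  fix i j
  show "Lam_iso n (Smat_one n :: nat \<Rightarrow> nat \<Rightarrow> 'a poly poly set) i j = Lmat_one n i j"
  proof (cases "inrng n i j")
    case True
    have "Scoord n (int j - int i) (Smat_one n i j :: 'a poly poly set) = (if i = j then 1 else 0)"
    proof (rule Scoord_eq)
      have "Sgen_exp n 0 = 0"
        using assms by (simp add: Sgen_exp_def)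
      then show "curve_eval n (Srep (Smat_one n i j :: 'a poly poly set))
          = dilate n (Sgen_exp n (int j - int i)) (if i = j then 1 else 0)"
        using True assms by (simp add: Smat_one_def curve_eval_Srep_Scls dilate_def pcompose_1)
    qed (use assms in simp)
    moreover have "cexp n i i = 0"
      using assms True by (simp add: cexp_def inrng_def)
    ultimately show ?thesis
      using True by (cases "i = j") (simp_all add: Lam_iso_def Lmat_one_def One_fract_def Zero_fract_def)
  qed (simp add: Lam_iso_def Lmat_one_def)
qed

lemma Scoord_Smat_mul:
  assumes n: "n \<ge> 3" and A: "A \<in> Sn n" and B: "B \<in> Sn n" and ij: "inrng n i j"
  shows "Scoord n (int j - int i) (Smat_mul n A B i j)
    = (\<Sum>l\<in>{1..n}. monom 1 (nat (cexp n i l + cexp n l j - cexp n i j))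
         * (Scoord n (int l - int i) (A i l) * Scoord n (int j - int l) (B l j)))"
    (is "_ = ?s")
proof (rule Scoord_eq[OF n])
  have "curve_eval n (Srep (A i l)) * curve_eval n (Srep (B l j))
      = dilate n (Sgen_exp n (int j - int i)) (monom 1 (nat (cexp n i l + cexp n l j - cexp n i j))
         * (Scoord n (int l - int i) (A i l) * Scoord n (int j - int l) (B l j)))"
    if "l \<in> {1..n}" for l
  proof -
    have il: "inrng n i l" and lj: "inrng n l j"
      using ij that by (auto simp: inrng_def)
    show ?thesis
      by (simp add: curve_eval_Srep_Sn_entry[OF n A il] curve_eval_Srep_Sn_entry[OF n B lj]
          dilate_mult dilate_monom_mult Sgen_exp_add[OF n il lj])
  qed
  then show "curve_eval n (Srep (Smat_mul n A B i j)) = dilate n (Sgen_exp n (int j - int i)) ?s"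
    using ij n by (simp add: Smat_mul_def curve_eval_Srep_Scls curve_eval_sum curve_eval_mult dilate_sum)
qed

lemma Lam_iso_mul:
  assumes n: "n \<ge> 3" and A: "A \<in> Sn n" and B: "B \<in> Sn n"
  shows "Lam_iso n (Smat_mul n A B) = Lmat_mul n (Lam_iso n A) (Lam_iso n B)"
proof (intro ext)
  fix i j
  show "Lam_iso n (Smat_mul n A B) i j = Lmat_mul n (Lam_iso n A) (Lam_iso n B) i j"
  proof (cases "inrng n i j")
    case ij: True
    have "xK powi cexp n i j * Fract (monom 1 (nat (cexp n i l + cexp n l j - cexp n i j))
          * (Scoord n (int l - int i) (A i l) * Scoord n (int j - int l) (B l j))) 1
        = Lam_iso n A i l * Lam_iso n B l j"
      if "l \<in> {1..n}" for l
    proof -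
      have il: "inrng n i l" and lj: "inrng n l j"
        using ij that by (auto simp: inrng_def)
      then show ?thesis
        using power_int_mult_power_nat_diff[OF xK_nonzero[where 'a = 'a] cexp_le_add[OF n il lj]]
        by (simp add: Lam_iso_def Fract_mult_one Fract_monom_one ac_simps del: mult_fract)
    qed
    then show ?thesis
      using ij by (simp add: Lam_iso_def Lmat_mul_def Scoord_Smat_mul[OF n A B ij] Fract_sum
          sum_distrib_left)
  qed (simp add: Lam_iso_def Lmat_mul_def)
qed

lemma inj_on_Lam_iso:
  assumes n: "n \<ge> 3"
  shows "inj_on (Lam_iso n) (Sn n :: (nat \<Rightarrow> nat \<Rightarrow> 'a::field poly poly set) set)"
proof (rule inj_onI)
  fix A B :: "nat \<Rightarrow> nat \<Rightarrow> 'a poly poly set"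
  assume A: "A \<in> Sn n" and B: "B \<in> Sn n" and eq: "Lam_iso n A = Lam_iso n B"
  show "A = B"
  proof (intro ext)
    fix i j
    show "A i j = B i j"
    proof (cases "inrng n i j")
      case True
      have "Fract (Scoord n (int j - int i) (A i j)) 1 = Fract (Scoord n (int j - int i) (B i j)) 1"
        using fun_cong[OF fun_cong[OF eq, of i], of j] True by (simp add: Lam_iso_def xK_nonzero)
      then show ?thesis
        using True A B n by (intro Scoord_inj) (simp_all add: eq_fract Sn_entry_in_Sgr)
    qed (use A B in \<open>simp add: Sn_def\<close>)
  qed
qed

lemma Lam_iso_surj:
  assumes n: "n \<ge> 3" and L: "L \<in> Lam n"
  obtains A :: "nat \<Rightarrow> nat \<Rightarrow> 'a::field poly poly set" where "A \<in> Sn n" "Lam_iso n A = L"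
proof -
  define P where "P i j = (SOME p. L i j = xK powi cexp n i j * Fract p 1)" for i j
  have P: "L i j = xK powi cexp n i j * Fract (P i j) 1" if "inrng n i j" for i j
    using L that unfolding Lam_def P_def by (auto intro: someI_ex)
  define A :: "nat \<Rightarrow> nat \<Rightarrow> 'a poly poly set" where
    "A i j = (if inrng n i j then Scls n (Sgen n (int j - int i) * Rmap (P i j)) else Scls n 0)" for i j
  have "A \<in> Sn n"
    using n by (simp add: Sn_def A_def Scls_Sgen_Rmap_in_Sgr)
  moreover have "Lam_iso n A i j = L i j" for i j
    using n L P by (cases "inrng n i j") (simp_all add: Lam_iso_def A_def Scoord_Scls_Sgen_Rmap Lam_def)
  ultimately show ?thesis
    using that by blast
qed

lemma bij_betw_Lam_iso:
  assumes "n \<ge> 3"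
  shows "bij_betw (Lam_iso n) (Sn n :: (nat \<Rightarrow> nat \<Rightarrow> 'a::field poly poly set) set) (Lam n)"
proof -
  have "Lam_iso n A \<in> Lam n" for A :: "nat \<Rightarrow> nat \<Rightarrow> 'a poly poly set"
    by (auto simp: Lam_def Lam_iso_def)
  moreover have "L \<in> Lam_iso n ` Sn n" if "L \<in> Lam n" for L
    using Lam_iso_surj[OF assms that] by (metis image_eqI)
  ultimately show ?thesis
    using inj_on_Lam_iso[OF assms] by (auto simp: bij_betw_def)
qed

theorem proposition3p24:
  fixes n :: nat
  assumes "n \<ge> 3"
  shows "\<exists>\<phi> :: (nat \<Rightarrow> nat \<Rightarrow> 'a::field poly poly set) \<Rightarrow> (nat \<Rightarrow> nat \<Rightarrow> 'a poly fract).
           bij_betw \<phi> (Sn n) (Lam n)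
         \<and> (\<forall>A\<in>Sn n. \<forall>B\<in>Sn n. \<phi> (Smat_add n A B) = Lmat_add n (\<phi> A) (\<phi> B))
         \<and> (\<forall>A\<in>Sn n. \<forall>B\<in>Sn n. \<phi> (Smat_mul n A B) = Lmat_mul n (\<phi> A) (\<phi> B))
         \<and> \<phi> (Smat_one n) = Lmat_one n
         \<and> (\<forall>r. \<forall>A\<in>Sn n. \<phi> (Smat_scale n r A) = Lmat_scale n r (\<phi> A))"
  using bij_betw_Lam_iso[OF assms] Lam_iso_add[OF assms] Lam_iso_mul[OF assms]
    Lam_iso_one[OF assms] Lam_iso_scale[OF assms]
  by blast

end
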